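(* Let $a_0=1$, let $a_1,a_2,\ldots>0$ and $b_1,b_2,\ldots\in\mathbb{R}$, and let $A$ be the associated semi-infinite Jacobi matrix. For $T\in\mathbb{N}$ let $C_T$ be the $T\times T$ matrix with entries $\{C_T\}_{ij}=\int_{\mathbb{R}}\mathcal{T}_i(\lambda)\mathcal{T}_j(\lambda)\,d\rho(\lambda)$, $i,j=1,\ldots,T$, where $\rho$ is any solution of the Hamburger moment problem with moments $s_k=(A^ke_1,e_1)$, and let $\gamma_T$ be the largest eigenvalue of $C_T$. If there exists a constant $M\in\mathbb{R}$ with $\gamma_T\leqslant M$ for all $T=1,2,\ldots$, then $A$ is in the limit point case, i.e. the moment problem associated with $\{s_k\}$ is determinate.
   Context: Here $e_1=(1,0,0,\ldots)$ and $A$ acts on finitely supported sequences by $(A\theta)_1=b_1\theta_1+a_1\theta_2$, $(A\theta)_n=a_n\theta_{n+1}+a_{n-1}\theta_{n-1}+b_n\theta_n$ for $n\ge2$. A solution of the moment problem is a Borel measure $\rho$ on $\mathbb{R}$ with $\int\lambda^k\,d\rho=s_k$ for all $k\ge0$; determinate means the solution is unique, which is equivalent to $A$ (on finitely supported sequences in $l_2$) having deficiency indices $(0,0)$ (limit point case). The polynomials $\mathcal{T}_k$ are defined by $\mathcal{T}_0=0$, $\mathcal{T}_1=1$, $\mathcal{T}_{t+1}(\lambda)+\mathcal{T}_{t-1}(\lambda)-\lambda\mathcal{T}_t(\lambda)=0$; $C_T$ does not depend on the choice of $\rho$. *)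

theory Defs
  imports "HOL-Probability.Probability" "Jordan_Normal_Form.Char_Poly"
begin

text \<open>Sequences are indexed from 1; index 0 of a sequence is unused (kept 0).
  The Jacobi operator A acting on (finitely supported) sequences.\<close>
definition jacobi_op :: "(nat \<Rightarrow> real) \<Rightarrow> (nat \<Rightarrow> real) \<Rightarrow> (nat \<Rightarrow> real) \<Rightarrow> (nat \<Rightarrow> real)" where
  "jacobi_op a b \<theta> n =
     (if n = 0 then 0
      else if n = 1 then b 1 * \<theta> 1 + a 1 * \<theta> 2
      else a n * \<theta> (n + 1) + a (n - 1) * \<theta> (n - 1) + b n * \<theta> n)"

definition e1 :: "nat \<Rightarrow> real" where
  "e1 n = (if n = 1 then 1 else 0)"

definition jacobi_moment :: "(nat \<Rightarrow> real) \<Rightarrow> (nat \<Rightarrow> real) \<Rightarrow> nat \<Rightarrow> real" where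
  "jacobi_moment a b k = ((jacobi_op a b ^^ k) e1) 1"

definition moment_solution :: "(nat \<Rightarrow> real) \<Rightarrow> real measure \<Rightarrow> bool" where
  "moment_solution s \<rho> \<longleftrightarrow> sets \<rho> = sets borel \<and>
     (\<forall>k. integrable \<rho> (\<lambda>x. x ^ k) \<and> (\<integral>x. x ^ k \<partial>\<rho>) = s k)"

fun Tpoly :: "nat \<Rightarrow> real \<Rightarrow> real" where
  "Tpoly 0 x = 0"
| "Tpoly (Suc 0) x = 1"
| "Tpoly (Suc (Suc t)) x = x * Tpoly (Suc t) x - Tpoly t x"

text \<open>C_T as a T x T matrix (0-based JNF indices i,j correspond to entries i+1, j+1).\<close>
definition C_mat :: "real measure \<Rightarrow> nat \<Rightarrow> real mat" where
  "C_mat \<rho> T = mat T T (\<lambda>(i, j). \<integral>x. Tpoly (i + 1) x * Tpoly (j + 1) x \<partial>\<rho>)"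

definition largest_eigenvalue :: "real mat \<Rightarrow> real" where
  "largest_eigenvalue M = Max {k. eigenvalue M k}"

end

theory Submission
  imports Defs
begin

(* The last diagonal entry of C_T is the integral of T_T^2 against rho, and a diagonal
   entry of a symmetric matrix is bounded by the maximum of its quadratic form on the unit
   sphere, which is an eigenvalue; so the integral of T_T^2 is at most gamma_T <= M.
   For |lambda| >= 2 the recurrence forces |T_T(lambda)| >= T, hence
   rho{|lambda| >= 2} * T^2 <= M for all T and rho lives on (-2, 2).  With s_2k <= 4^k the
   Taylor polynomials of the characteristic function, which depend on the moments alone,
   converge to the characteristic function of every solution, so all solutions coincide
   by Levy's uniqueness theorem. *)

(* Vectors of R^n are functions nat => real of which only the values below n matter,
   so that the unit sphere is a compact set of the product topology. *)
definition quad_form :: "nat \<Rightarrow> (nat \<Rightarrow> nat \<Rightarrow> real) \<Rightarrow> (nat \<Rightarrow> real) \<Rightarrow> real" where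
  "quad_form n c x = (\<Sum>i<n. \<Sum>j<n. x i * c i j * x j)"

definition sq_norm :: "nat \<Rightarrow> (nat \<Rightarrow> real) \<Rightarrow> real" where
  "sq_norm n x = (\<Sum>i<n. (x i)\<^sup>2)"

lemma sq_norm_nonneg: "0 \<le> sq_norm n x"
  by (simp add: sq_norm_def sum_nonneg)

lemma sq_norm_eq_0_iff: "sq_norm n x = 0 \<longleftrightarrow> (\<forall>i<n. x i = 0)"
  by (auto simp: sq_norm_def sum_nonneg_eq_0_iff)

lemma sq_norm_unit_vector: "k < n \<Longrightarrow> sq_norm n (\<lambda>i. if i = k then 1 else 0) = 1"
  unfolding sq_norm_def by (subst sum.cong[OF refl, of _ _ "\<lambda>i. if i = k then 1 else 0"]) auto

lemma quad_form_unit_vector: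
  assumes "k < n"
  shows "quad_form n c (\<lambda>i. if i = k then 1 else 0) = c k k"
proof -
  have "(\<Sum>j<n. (if i = k then 1 else 0) * c i j * (if j = k then 1 else 0)) = (if i = k then c k k else 0)"
    for i using assms by (cases "i = k") (simp_all add: if_distrib cong: if_cong)
  then show ?thesis using assms by (simp add: quad_form_def)
qed

lemma sq_norm_scale: "sq_norm n (\<lambda>i. r * x i) = r\<^sup>2 * sq_norm n x"
  by (simp add: sq_norm_def power_mult_distrib sum_distrib_left)

lemma quad_form_scale: "quad_form n c (\<lambda>i. r * x i) = r\<^sup>2 * quad_form n c x"
  by (simp add: quad_form_def sum_distrib_left power2_eq_square algebra_simps)

lemma sq_norm_add_scaled:
  "sq_norm n (\<lambda>i. x i + t * w i) = sq_norm n x + 2 * t * (\<Sum>i<n. w i * x i) + t\<^sup>2 * sq_norm n w"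
  by (simp add: sq_norm_def sum.distrib sum_distrib_left algebra_simps power2_eq_square)

lemma quad_form_add_scaled:
  assumes symmetric: "\<And>i j. i < n \<Longrightarrow> j < n \<Longrightarrow> c i j = c j i"
  shows "quad_form n c (\<lambda>i. x i + t * w i)
     = quad_form n c x + 2 * t * (\<Sum>i<n. w i * (\<Sum>j<n. c i j * x j)) + t\<^sup>2 * quad_form n c w"
proof -
  have swap: "(\<Sum>i<n. \<Sum>j<n. x i * c i j * w j) = (\<Sum>i<n. \<Sum>j<n. w i * c i j * x j)"
    by (subst sum.swap) (auto intro!: sum.cong simp: symmetric mult.commute)
  have "quad_form n c (\<lambda>i. x i + t * w i) = quad_form n c x
      + t * (\<Sum>i<n. \<Sum>j<n. x i * c i j * w j) + t * (\<Sum>i<n. \<Sum>j<n. w i * c i j * x j)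
      + t\<^sup>2 * quad_form n c w"
    by (simp add: quad_form_def sum.distrib sum_distrib_left algebra_simps power2_eq_square)
  also have "\<dots> = quad_form n c x + 2 * t * (\<Sum>i<n. w i * (\<Sum>j<n. c i j * x j)) + t\<^sup>2 * quad_form n c w"
    unfolding swap by (simp add: sum_distrib_left algebra_simps)
  finally show ?thesis .
qed

lemma zero_if_quadratic_nonpos:
  fixes N K :: real
  assumes "\<And>t. 2 * t * N + t\<^sup>2 * K \<le> 0" and "N \<ge> 0"
  shows "N = 0"
proof (rule ccontr)
  assume "N \<noteq> 0"
  with assms(2) have N: "N > 0" by simp
  define t where "t = N / (\<bar>K\<bar> + 1)"
  have t: "t > 0" using N by (simp add: t_def add_pos_nonneg)
  have "t * (2 * N + t * K) \<le> 0"
    using assms(1)[of t] by (simp add: power2_eq_square algebra_simps)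
  then have "2 * N + t * K \<le> 0" using t by (simp add: mult_le_0_iff)
  moreover have "t * \<bar>K\<bar> < N" using N by (simp add: t_def field_simps)
  moreover have "t * (- K) \<le> t * \<bar>K\<bar>" using t by (intro mult_left_mono) auto
  ultimately show False using N by linarith
qed

lemma quad_form_attains_max_on_unit_sphere:
  assumes "0 < n"
  obtains x0 where "sq_norm n x0 = 1" and "\<And>y. sq_norm n y = 1 \<Longrightarrow> quad_form n c y \<le> quad_form n c x0"
proof -
  define restrict :: "(nat \<Rightarrow> real) \<Rightarrow> nat \<Rightarrow> real" where "restrict y i = (if i < n then y i else 0)" for y i
  define B where "B = Pi\<^sub>E UNIV (\<lambda>i::nat. if i < n then {-1..1::real} else {0})"
  define S where "S = B \<inter> {x. sq_norm n x = 1}"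
  have "compactin (product_topology (\<lambda>i. euclidean) UNIV) B"
    unfolding B_def by (subst compactin_PiE) auto
  then have "compact B" by (simp add: euclidean_product_topology)
  moreover have "closed {x. sq_norm n x = 1}"
    unfolding sq_norm_def
    by (intro closed_Collect_eq continuous_intros continuous_on_product_then_coordinatewise continuous_on_id)
  ultimately have "compact S" unfolding S_def by (rule compact_Int_closed)
  have restrict_in_S: "restrict y \<in> S" if "sq_norm n y = 1" for y
  proof -
    have "\<bar>y i\<bar> \<le> 1" if "i < n" for i
    proof -
      have "(y i)\<^sup>2 \<le> sq_norm n y"
        unfolding sq_norm_def by (rule member_le_sum) (use \<open>i < n\<close> in auto)
      with \<open>sq_norm n y = 1\<close> show ?thesis by (simp add: abs_square_le_1)
    qed
    moreover have "sq_norm n (restrict y) = sq_norm n y"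
      by (simp add: sq_norm_def restrict_def)
    ultimately show ?thesis using that by (auto simp: S_def B_def restrict_def abs_le_iff)
  qed
  have "continuous_on S (quad_form n c)"
    unfolding quad_form_def
    by (intro continuous_intros continuous_on_product_then_coordinatewise continuous_on_id)
  moreover have "S \<noteq> {}"
    using restrict_in_S[OF sq_norm_unit_vector[OF assms]] by blast
  ultimately obtain x0 where "x0 \<in> S" and x0_max: "\<And>y. y \<in> S \<Longrightarrow> quad_form n c y \<le> quad_form n c x0"
    using continuous_attains_sup[OF \<open>compact S\<close>] by blast
  show ?thesis
  proof
    show "sq_norm n x0 = 1" using \<open>x0 \<in> S\<close> by (simp add: S_def)
    fix y assume "sq_norm n y = 1"
    have "quad_form n c y = quad_form n c (restrict y)"
      by (simp add: quad_form_def restrict_def)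
    also have "\<dots> \<le> quad_form n c x0"
      using x0_max restrict_in_S \<open>sq_norm n y = 1\<close> by blast
    finally show "quad_form n c y \<le> quad_form n c x0" .
  qed
qed

lemma quad_form_le_mult_sq_norm:
  assumes "\<And>y. sq_norm n y = 1 \<Longrightarrow> quad_form n c y \<le> \<mu>"
  shows "quad_form n c z \<le> \<mu> * sq_norm n z"
proof (cases "sq_norm n z = 0")
  case True
  then have "quad_form n c z = 0" by (simp add: sq_norm_eq_0_iff quad_form_def)
  with True show ?thesis by simp
next
  case False
  then have pos: "sq_norm n z > 0" using sq_norm_nonneg[of n z] by linarith
  define r where "r = 1 / sqrt (sq_norm n z)"
  have r2: "r\<^sup>2 * sq_norm n z = 1" using pos by (simp add: r_def power_divide)
  then have "r\<^sup>2 * quad_form n c z \<le> \<mu>"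
    using assms[of "\<lambda>i. r * z i"] by (simp add: sq_norm_scale quad_form_scale)
  also have "\<dots> = r\<^sup>2 * (\<mu> * sq_norm n z)" using r2 by (simp add: algebra_simps)
  finally show ?thesis using pos by (simp add: r_def)
qed

(* Perturbing x0 along the residual w = C x0 - mu x0 gives 2 t |w|^2 + O(t^2) <= 0 for all t. *)
lemma eigen_equation_if_rayleigh_max:
  assumes symmetric: "\<And>i j. i < n \<Longrightarrow> j < n \<Longrightarrow> c i j = c j i"
    and bound: "\<And>z. quad_form n c z \<le> \<mu> * sq_norm n z"
    and attained: "quad_form n c x0 = \<mu> * sq_norm n x0"
    and "i < n"
  shows "(\<Sum>j<n. c i j * x0 j) = \<mu> * x0 i"
proof -
  define w where "w i = (\<Sum>j<n. c i j * x0 j) - \<mu> * x0 i" for i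
  have "(\<Sum>j<n. c i j * x0 j) = w i + \<mu> * x0 i" for i by (simp add: w_def)
  then have w_Cx0: "(\<Sum>i<n. w i * (\<Sum>j<n. c i j * x0 j)) = sq_norm n w + \<mu> * (\<Sum>i<n. w i * x0 i)"
    by (simp add: sq_norm_def power2_eq_square distrib_left sum.distrib sum_distrib_left mult.left_commute)
  have "2 * t * sq_norm n w + t\<^sup>2 * (quad_form n c w - \<mu> * sq_norm n w) \<le> 0" for t
  proof -
    have "quad_form n c (\<lambda>i. x0 i + t * w i) \<le> \<mu> * sq_norm n (\<lambda>i. x0 i + t * w i)"
      by (rule bound)
    moreover have "quad_form n c (\<lambda>i. x0 i + t * w i)
        = quad_form n c x0 + 2 * t * (\<Sum>i<n. w i * (\<Sum>j<n. c i j * x0 j)) + t\<^sup>2 * quad_form n c w"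
      using symmetric by (rule quad_form_add_scaled)
    ultimately show ?thesis
      unfolding sq_norm_add_scaled attained w_Cx0 by (simp add: algebra_simps)
  qed
  then have "sq_norm n w = 0" by (rule zero_if_quadratic_nonpos) (rule sq_norm_nonneg)
  with \<open>i < n\<close> have "w i = 0" by (simp add: sq_norm_eq_0_iff)
  then show ?thesis by (simp add: w_def)
qed

lemma eigenvalue_if_eigen_equation:
  fixes C :: "real mat"
  assumes C: "C \<in> carrier_mat n n"
    and eq: "\<And>i. i < n \<Longrightarrow> (\<Sum>j<n. C $$ (i, j) * x j) = \<mu> * x i"
    and nonzero: "k < n" "x k \<noteq> 0"
  shows "eigenvalue C \<mu>"
  unfolding eigenvalue_def eigenvector_def
proof (intro exI conjI)
  show "vec n x \<in> carrier_vec (dim_row C)" using C by simp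
  show "vec n x \<noteq> 0\<^sub>v (dim_row C)"
    using C nonzero by (metis carrier_matD(1) index_vec index_zero_vec(1))
  show "C *\<^sub>v vec n x = \<mu> \<cdot>\<^sub>v vec n x"
  proof (rule eq_vecI)
    fix i assume "i < dim_vec (\<mu> \<cdot>\<^sub>v vec n x)"
    then have "i < n" by simp
    then have "(C *\<^sub>v vec n x) $ i = (\<Sum>j<n. C $$ (i, j) * x j)"
      using C by (simp add: scalar_prod_def lessThan_atLeast0 row_def)
    with eq \<open>i < n\<close> show "(C *\<^sub>v vec n x) $ i = (\<mu> \<cdot>\<^sub>v vec n x) $ i" by simp
  qed (use C in simp)
qed

lemma eigenvalue_le_largest_eigenvalue:
  fixes C :: "real mat"
  assumes C: "C \<in> carrier_mat n n" and "eigenvalue C \<mu>"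
  shows "\<mu> \<le> largest_eigenvalue C"
proof -
  have "char_poly C \<noteq> 0" using degree_monic_char_poly[OF C] by auto
  then have "finite {k. poly (char_poly C) k = 0}" by (rule poly_roots_finite)
  then have "finite {k. eigenvalue C k}" using eigenvalue_root_char_poly[OF C] by simp
  with \<open>eigenvalue C \<mu>\<close> show ?thesis by (simp add: largest_eigenvalue_def)
qed

lemma diagonal_le_largest_eigenvalue:
  fixes C :: "real mat"
  assumes C: "C \<in> carrier_mat n n"
    and symmetric: "\<And>i j. i < n \<Longrightarrow> j < n \<Longrightarrow> C $$ (i, j) = C $$ (j, i)"
    and "k < n"
  shows "C $$ (k, k) \<le> largest_eigenvalue C"
proof -
  define c where "c i j = C $$ (i, j)" for i j
  obtain x0 where x0_unit: "sq_norm n x0 = 1"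
    and x0_max: "\<And>y. sq_norm n y = 1 \<Longrightarrow> quad_form n c y \<le> quad_form n c x0"
    using quad_form_attains_max_on_unit_sphere[of n c] \<open>k < n\<close> by auto
  define \<mu> where "\<mu> = quad_form n c x0"
  have eigen_equation: "(\<Sum>j<n. C $$ (i, j) * x0 j) = \<mu> * x0 i" if "i < n" for i
  proof -
    have "(\<Sum>j<n. c i j * x0 j) = \<mu> * x0 i"
    proof (rule eigen_equation_if_rayleigh_max)
      show "c i j = c j i" if "i < n" "j < n" for i j using symmetric that by (simp add: c_def)
      show "quad_form n c z \<le> \<mu> * sq_norm n z" for z
        by (rule quad_form_le_mult_sq_norm) (simp add: x0_max \<mu>_def)
    qed (simp_all add: \<mu>_def x0_unit that)
    then show ?thesis by (simp add: c_def)
  qed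
  obtain i where "i < n" "x0 i \<noteq> 0"
    using x0_unit sq_norm_eq_0_iff[of n x0] by auto
  then have "eigenvalue C \<mu>" using eigenvalue_if_eigen_equation[OF C] eigen_equation by blast
  have "C $$ (k, k) = quad_form n c (\<lambda>i. if i = k then 1 else 0)"
    using \<open>k < n\<close> by (simp add: quad_form_unit_vector c_def)
  also have "\<dots> \<le> \<mu>"
    unfolding \<mu>_def using x0_max sq_norm_unit_vector \<open>k < n\<close> by blast
  also have "\<dots> \<le> largest_eigenvalue C"
    using eigenvalue_le_largest_eigenvalue[OF C \<open>eigenvalue C \<mu>\<close>] .
  finally show ?thesis .
qed

fun Tpolynomial :: "nat \<Rightarrow> real poly" where
  "Tpolynomial 0 = 0"
| "Tpolynomial (Suc 0) = 1"
| "Tpolynomial (Suc (Suc t)) = [:0, 1:] * Tpolynomial (Suc t) - Tpolynomial t"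

lemma poly_Tpolynomial: "poly (Tpolynomial n) x = Tpoly n x"
  by (induction n rule: Tpolynomial.induct) auto

lemma Tpoly_abs_step:
  assumes "2 \<le> \<bar>x\<bar>"
  shows "\<bar>Tpoly n x\<bar> + 1 \<le> \<bar>Tpoly (Suc n) x\<bar>"
proof (induction n)
  case (Suc n)
  have "2 * \<bar>Tpoly (Suc n) x\<bar> \<le> \<bar>x * Tpoly (Suc n) x\<bar>"
    unfolding abs_mult using assms by (intro mult_right_mono) auto
  then show ?case using Suc.IH by simp
qed simp

lemma Tpoly_abs_ge:
  assumes "2 \<le> \<bar>x\<bar>"
  shows "real n \<le> \<bar>Tpoly n x\<bar>"
proof (induction n)
  case (Suc n)
  with Tpoly_abs_step[OF assms, of n] show ?case by simp
qed simp

lemma integrable_poly: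
  fixes \<mu> :: "real measure"
  assumes "\<And>k. integrable \<mu> (\<lambda>x. x ^ k)"
  shows "integrable \<mu> (\<lambda>x. poly p x)"
  unfolding poly_altdef using assms by (intro Bochner_Integration.integrable_sum integrable_mult_right) auto

lemma integrable_Tpoly_square:
  assumes "moment_solution s \<mu>"
  shows "integrable \<mu> (\<lambda>x. Tpoly n x * Tpoly n x)"
proof -
  have "integrable \<mu> (\<lambda>x. poly (Tpolynomial n * Tpolynomial n) x)"
    using assms by (intro integrable_poly) (simp add: moment_solution_def)
  then show ?thesis by (simp add: poly_Tpolynomial)
qed

lemma moment_solution_real_distribution:
  assumes "moment_solution s \<mu>" and "s 0 = 1"
  shows "real_distribution \<mu>"
proof -
  have "integrable \<mu> (\<lambda>x. x ^ 0)" and "(\<integral>x. x ^ 0 \<partial>\<mu>) = s 0"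
    using assms(1) unfolding moment_solution_def by blast+
  then have "integrable \<mu> (\<lambda>x. 1::real)" and "(\<integral>x. 1 \<partial>\<mu>) = (1::real)"
    using assms(2) by simp_all
  then have "(\<integral>\<^sup>+x. ennreal 1 \<partial>\<mu>) = 1"
    by (subst nn_integral_eq_integral) auto
  then have "prob_space \<mu>" by (intro prob_spaceI) (simp add: nn_integral_const)
  with assms(1) show ?thesis
    by (simp add: moment_solution_def real_distribution_def real_distribution_axioms_def)
qed

lemma AE_abs_less_2_if_Tpoly_square_integrals_bounded:
  assumes solution: "moment_solution s \<rho>" and "s 0 = 1"
    and bounded: "\<And>n. 1 \<le> n \<Longrightarrow> (\<integral>x. Tpoly n x * Tpoly n x \<partial>\<rho>) \<le> M"
  shows "AE x in \<rho>. \<bar>x\<bar> < 2"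
proof -
  interpret real_distribution \<rho>
    using moment_solution_real_distribution[OF assms(1,2)] .
  define S where "S = {x::real. 2 \<le> \<bar>x\<bar>}"
  have S: "S \<in> sets \<rho>" unfolding S_def by measurable
  have bound: "prob S * real n \<le> M" if "1 \<le> n" for n
  proof -
    have "prob S * real n \<le> prob S * (real n)\<^sup>2"
      using that by (intro mult_left_mono) (auto simp: power2_eq_square)
    also have "\<dots> = (\<integral>x. indicator S x * (real n)\<^sup>2 \<partial>\<rho>)"
      using S by simp
    also have "\<dots> \<le> (\<integral>x. Tpoly n x * Tpoly n x \<partial>\<rho>)"
    proof (rule integral_mono)
      show "integrable \<rho> (\<lambda>x. indicator S x * (real n)\<^sup>2)"
        using S by (intro integrable_mult_left integrable_real_indicator) (auto simp: emeasure_eq_measure)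
      show "integrable \<rho> (\<lambda>x. Tpoly n x * Tpoly n x)"
        using solution by (rule integrable_Tpoly_square)
      fix x :: real
      show "indicator S x * (real n)\<^sup>2 \<le> Tpoly n x * Tpoly n x"
      proof (cases "x \<in> S")
        case True
        then have "(real n)\<^sup>2 \<le> \<bar>Tpoly n x\<bar>\<^sup>2"
          using Tpoly_abs_ge by (intro power_mono) (auto simp: S_def)
        with True show ?thesis by (simp add: power2_eq_square)
      qed simp
    qed
    also have "\<dots> \<le> M" using bounded[OF that] .
    finally show ?thesis .
  qed
  have "prob S = 0"
  proof (rule ccontr)
    assume "prob S \<noteq> 0"
    then have "0 < prob S" using measure_nonneg[of \<rho> S] by linarith
    then obtain n where "M < real n * prob S" using reals_Archimedean3 by blast
    then have "M < prob S * real (Suc n)" using \<open>0 < prob S\<close> by (simp add: algebra_simps)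
    with bound[of "Suc n"] show False by simp
  qed
  with S have "S \<in> null_sets \<rho>" by (simp add: null_sets_def emeasure_eq_measure)
  then have "AE x in \<rho>. x \<notin> S" by (rule AE_not_in)
  then show ?thesis by eventually_elim (auto simp: S_def)
qed

lemma power_over_fact_LIMSEQ_zero: "(\<lambda>n. x ^ n / fact n) \<longlonglongrightarrow> (0::real)"
  using summable_LIMSEQ_zero[OF summable_exp] by (simp add: inverse_eq_divide)

lemma (in real_distribution) abs_moment_le_1_plus_even_moment:
  assumes moments: "\<And>k. integrable M (\<lambda>x. x ^ k)"
  shows "expectation (\<lambda>x. \<bar>x\<bar> ^ n) \<le> 1 + expectation (\<lambda>x. x ^ (2 * n))"
proof -
  have "expectation (\<lambda>x. \<bar>x\<bar> ^ n) \<le> expectation (\<lambda>x. 1 + x ^ (2 * n))"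
  proof (rule integral_mono)
    show "integrable M (\<lambda>x. \<bar>x\<bar> ^ n)"
      unfolding power_abs[symmetric] using moments by (rule integrable_abs)
    show "integrable M (\<lambda>x. 1 + x ^ (2 * n))" using moments by simp
    fix x :: real
    show "\<bar>x\<bar> ^ n \<le> 1 + x ^ (2 * n)"
    proof (cases "\<bar>x\<bar> \<le> 1")
      case True
      then have "\<bar>x\<bar> ^ n \<le> 1" by (simp add: power_le_one)
      moreover have "0 \<le> x ^ (2 * n)" by (simp add: power_mult)
      ultimately show ?thesis by linarith
    next
      case False
      then have "\<bar>x\<bar> ^ n \<le> \<bar>x\<bar> ^ (2 * n)" by (intro power_increasing) auto
      then show ?thesis by (simp add: power_abs power_mult)
    qed
  qed
  also have "\<dots> = 1 + expectation (\<lambda>x. x ^ (2 * n))"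
    using moments prob_space by simp
  finally show ?thesis .
qed

lemma (in real_distribution) char_taylor_LIMSEQ:
  assumes moments: "\<And>k. integrable M (\<lambda>x. x ^ k)"
    and even_moments: "\<And>k. expectation (\<lambda>x. x ^ (2 * k)) \<le> R ^ (2 * k)"
  shows "(\<lambda>n. \<Sum>k\<le>n. (\<i> * t) ^ k / fact k * expectation (\<lambda>x. x ^ k)) \<longlonglongrightarrow> char M t"
proof (rule metric_tendsto_imp_tendsto)
  define bound where "bound n = 2 * (\<bar>t\<bar> ^ n / fact n) + 2 * ((\<bar>t\<bar> * R\<^sup>2) ^ n / fact n)" for n
  show "bound \<longlonglongrightarrow> 0"
    unfolding bound_def by (intro tendsto_add_zero tendsto_mult_right_zero power_over_fact_LIMSEQ_zero)
  show "\<forall>\<^sub>F n in sequentially.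
      dist (\<Sum>k\<le>n. (\<i> * t) ^ k / fact k * expectation (\<lambda>x. x ^ k)) (char M t) \<le> dist (bound n) 0"
  proof (intro always_eventually allI)
    fix n
    have "dist (\<Sum>k\<le>n. (\<i> * t) ^ k / fact k * expectation (\<lambda>x. x ^ k)) (char M t)
        \<le> 2 * \<bar>t\<bar> ^ n / fact n * expectation (\<lambda>x. \<bar>x\<bar> ^ n)"
      using char_approx1[of n t] moments by (simp add: dist_norm norm_minus_commute)
    also have "\<dots> \<le> 2 * \<bar>t\<bar> ^ n / fact n * (1 + R ^ (2 * n))"
      using abs_moment_le_1_plus_even_moment[OF moments, of n] even_moments[of n]
      by (intro mult_left_mono) auto
    also have "\<dots> = bound n"
      unfolding power_mult by (simp add: bound_def power_mult_distrib field_simps)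
    also have "\<dots> \<le> dist (bound n) 0" by simp
    finally show "dist (\<Sum>k\<le>n. (\<i> * t) ^ k / fact k * expectation (\<lambda>x. x ^ k)) (char M t)
        \<le> dist (bound n) 0" .
  qed
qed

lemma moment_solution_unique_if_bounded_support:
  assumes "s 0 = 1" and \<rho>: "moment_solution s \<rho>" and support: "AE x in \<rho>. \<bar>x\<bar> \<le> R"
    and \<sigma>: "moment_solution s \<sigma>"
  shows "\<sigma> = \<rho>"
proof -
  have even_moments: "s (2 * k) \<le> R ^ (2 * k)" for k
  proof -
    interpret real_distribution \<rho>
      using moment_solution_real_distribution[OF \<rho> \<open>s 0 = 1\<close>] .
    have "s (2 * k) = expectation (\<lambda>x. x ^ (2 * k))"
      using \<rho> by (simp add: moment_solution_def)
    also have "\<dots> \<le> expectation (\<lambda>x. R ^ (2 * k))"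
    proof (rule integral_mono_AE)
      show "integrable \<rho> (\<lambda>x. x ^ (2 * k))" using \<rho> by (simp add: moment_solution_def)
      show "AE x in \<rho>. x ^ (2 * k) \<le> R ^ (2 * k)"
        using support
      proof eventually_elim
        fix x :: real assume "\<bar>x\<bar> \<le> R"
        then have "\<bar>x\<bar>\<^sup>2 \<le> R\<^sup>2" by (intro power_mono) auto
        then show "x ^ (2 * k) \<le> R ^ (2 * k)" by (simp add: power_mult power_mono)
      qed
    qed simp
    also have "\<dots> = R ^ (2 * k)" using prob_space by simp
    finally show ?thesis .
  qed
  have taylor: "(\<lambda>n. \<Sum>k\<le>n. (\<i> * t) ^ k / fact k * s k) \<longlonglongrightarrow> char \<nu> t"
    if \<nu>: "moment_solution s \<nu>" for \<nu> t
  proof -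
    interpret real_distribution \<nu>
      using moment_solution_real_distribution[OF \<nu> \<open>s 0 = 1\<close>] .
    have "\<And>k. integrable \<nu> (\<lambda>x. x ^ k)" and moments: "\<And>k. expectation (\<lambda>x. x ^ k) = s k"
      using \<nu> by (simp_all add: moment_solution_def)
    from char_taylor_LIMSEQ[OF this(1), of R t] show ?thesis
      by (simp add: moments even_moments)
  qed
  have "char \<sigma> = char \<rho>"
    using LIMSEQ_unique[OF taylor[OF \<sigma>] taylor[OF \<rho>]] by (intro ext)
  then show ?thesis
    using Levy_uniqueness moment_solution_real_distribution \<rho> \<sigma> \<open>s 0 = 1\<close> by blast
qed

lemma integral_Tpoly_square_le_largest_eigenvalue:
  assumes "1 \<le> n"
  shows "(\<integral>x. Tpoly n x * Tpoly n x \<partial>\<rho>) \<le> largest_eigenvalue (C_mat \<rho> n)"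
proof -
  have "(\<integral>x. Tpoly n x * Tpoly n x \<partial>\<rho>) = C_mat \<rho> n $$ (n - 1, n - 1)"
    using assms by (simp add: C_mat_def)
  also have "\<dots> \<le> largest_eigenvalue (C_mat \<rho> n)"
    by (rule diagonal_le_largest_eigenvalue) (use assms in \<open>auto simp: C_mat_def mult.commute\<close>)
  finally show ?thesis .
qed

lemma jacobi_moment_0: "jacobi_moment a b 0 = 1"
  by (simp add: jacobi_moment_def e1_def)

theorem mainTheorem2:
  fixes a b :: "nat \<Rightarrow> real" and \<rho> :: "real measure" and M :: real
  assumes "a 0 = 1"
    and "\<And>n. n \<ge> 1 \<Longrightarrow> a n > 0"
    and "moment_solution (jacobi_moment a b) \<rho>"
    and "\<And>T. T \<ge> 1 \<Longrightarrow> largest_eigenvalue (C_mat \<rho> T) \<le> M"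
  shows "\<forall>\<sigma>. moment_solution (jacobi_moment a b) \<sigma> \<longrightarrow> \<sigma> = \<rho>"
proof (intro allI impI)
  fix \<sigma> assume \<sigma>: "moment_solution (jacobi_moment a b) \<sigma>"
  have "AE x in \<rho>. \<bar>x\<bar> < 2"
  proof (rule AE_abs_less_2_if_Tpoly_square_integrals_bounded[OF assms(3) jacobi_moment_0])
    fix n :: nat assume "1 \<le> n"
    then show "(\<integral>x. Tpoly n x * Tpoly n x \<partial>\<rho>) \<le> M"
      using integral_Tpoly_square_le_largest_eigenvalue assms(4) by (meson order_trans)
  qed
  then have "AE x in \<rho>. \<bar>x\<bar> \<le> 2" by eventually_elim simp
  then show "\<sigma> = \<rho>"
    using moment_solution_unique_if_bounded_support[OF jacobi_moment_0 assms(3) _ \<sigma>] by blast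
qed

end
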